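(* Let $\mathcal{D}=(\Omega,\mathcal{B})$ be a supersimple $2$-$(n,4,\lambda)$ design such that $(\Omega,\mathcal{C})$ is a regular two-graph, where $\mathcal{C}$ is the set of collinear triples of $\mathcal{D}$. Then $n=6\lambda-2s$, where $s$ is the number of coherent $4$-subsets of $\Omega$ containing a given element of $\mathcal{C}$ (this number being independent of the element). In particular, $n$ is even.
   Context: A $2$-$(n,4,\lambda)$ design $(\Omega,\mathcal{B})$: $n$ points, a multiset of $4$-subsets (lines), every $2$-subset in exactly $\lambda$ lines; supersimple: distinct lines meet in at most two points. Collinear triple: $3$-subset contained in a line. A $2$-$(n,3,\mu)$ design $(\Omega,\mathcal{C})$ is a regular two-graph if every $4$-subset of $\Omega$ contains exactly $0,2$ or $4$ members of $\mathcal{C}$. A subset $X\subseteq\Omega$ is coherent if every $3$-subset of $X$ lies in $\mathcal{C}$. *)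

theory Defs
  imports Main "HOL-Library.Multiset"
begin

definition design_2_4 :: "'a set \<Rightarrow> 'a set multiset \<Rightarrow> nat \<Rightarrow> bool" where
  "design_2_4 \<Omega> B lam \<longleftrightarrow> finite \<Omega> \<and>
     (\<forall>b\<in>#B. b \<subseteq> \<Omega> \<and> card b = 4) \<and>
     (\<forall>P. P \<subseteq> \<Omega> \<and> card P = 2 \<longrightarrow> size (filter_mset (\<lambda>b. P \<subseteq> b) B) = lam)"

text \<open>Supersimple: any two distinct lines (distinct members of the multiset) meet in at most two points.\<close>
definition supersimple :: "'a set multiset \<Rightarrow> bool" where
  "supersimple B \<longleftrightarrow> (\<forall>b\<in>#B. \<forall>c\<in>#(B - {#b#}). card (b \<inter> c) \<le> 2)"

definition collinear_triples :: "'a set \<Rightarrow> 'a set multiset \<Rightarrow> 'a set set" where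
  "collinear_triples \<Omega> B = {T. T \<subseteq> \<Omega> \<and> card T = 3 \<and> (\<exists>b\<in>#B. T \<subseteq> b)}"

definition design_2_3 :: "'a set \<Rightarrow> 'a set set \<Rightarrow> nat \<Rightarrow> bool" where
  "design_2_3 \<Omega> C mu \<longleftrightarrow> finite \<Omega> \<and>
     (\<forall>T\<in>C. T \<subseteq> \<Omega> \<and> card T = 3) \<and>
     (\<forall>P. P \<subseteq> \<Omega> \<and> card P = 2 \<longrightarrow> card {T\<in>C. P \<subseteq> T} = mu)"

definition regular_two_graph :: "'a set \<Rightarrow> 'a set set \<Rightarrow> bool" where
  "regular_two_graph \<Omega> C \<longleftrightarrow> (\<exists>mu. design_2_3 \<Omega> C mu) \<and>
     (\<forall>X. X \<subseteq> \<Omega> \<and> card X = 4 \<longrightarrow> card {T\<in>C. T \<subseteq> X} \<in> {0, 2, 4})"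

definition coherent :: "'a set set \<Rightarrow> 'a set \<Rightarrow> bool" where
  "coherent C X \<longleftrightarrow> (\<forall>T. T \<subseteq> X \<and> card T = 3 \<longrightarrow> T \<in> C)"

end

theory Submission
  imports Defs
begin

text \<open>In a supersimple design every triple lies in at most one line, so each of the \<open>\<lambda>\<close> lines
  through a pair contributes two collinear triples: the collinear triples form a 2-(n,3,2\<lambda>)
  design. Fix a collinear triple T = {x,y,z}. Each pair in T lies in 2\<lambda> - 1 further collinear
  triples, so there are 3(2\<lambda> - 1) pairs (w, U) with w \<notin> T and U a collinear triple through w
  and two points of T. For a fixed w, the 4-set T \<union> {w} contains T and either one or three more
  collinear triples (the two-graph condition), three exactly when T \<union> {w} is coherent. Counting
  both ways gives 3(2\<lambda> - 1) = (n - 3) + 2s.\<close>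

lemma size_eq_card_set_mset:
  assumes "\<And>x. count M x \<le> 1"
  shows "size M = card (set_mset M)"
proof -
  have "M = mset_set (set_mset M)"
  proof (rule multiset_eqI)
    fix x
    show "count M x = count (mset_set (set_mset M)) x"
      using assms[of x] by (cases "x \<in># M") (auto simp: not_in_iff Suc_le_eq le_antisym)
  qed
  then show ?thesis by (metis size_mset_set)
qed

lemma subset_card3_of_four:
  assumes "distinct [w,x,y,z]" "U \<subseteq> {w,x,y,z}" "card U = 3"
  shows "U = {x,y,z} \<or> U = {w,x,y} \<or> U = {w,x,z} \<or> U = {w,y,z}"
proof -
  have "card ({w,x,y,z} - U) = 1"
    using assms by (simp add: card_Diff_subset finite_subset)
  then obtain v where "{w,x,y,z} - U = {v}" by (rule card_1_singletonE)
  then have "U = {w,x,y,z} - {v}" "v \<in> {w,x,y,z}" using assms(2) by auto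
  then show ?thesis using assms(1) by auto
qed

lemma card_one_point_extensions:
  assumes "T \<subseteq> \<Omega>" "finite T"
  shows "card {X. X \<subseteq> \<Omega> \<and> card X = Suc (card T) \<and> T \<subseteq> X \<and> P X}
       = card {w \<in> \<Omega> - T. P (insert w T)}"
proof -
  have "{X. X \<subseteq> \<Omega> \<and> card X = Suc (card T) \<and> T \<subseteq> X \<and> P X}
      = (\<lambda>w. insert w T) ` {w \<in> \<Omega> - T. P (insert w T)}"
  proof (intro equalityI subsetI)
    fix X assume X: "X \<in> {X. X \<subseteq> \<Omega> \<and> card X = Suc (card T) \<and> T \<subseteq> X \<and> P X}"
    then have "finite X" by (metis (mono_tags) card_eq_0_iff mem_Collect_eq nat.distinct(1))
    with X have "card (X - T) = 1" using assms(2) by (simp add: card_Diff_subset)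
    then obtain w where "X - T = {w}" by (rule card_1_singletonE)
    with X have "X = insert w T" "w \<in> \<Omega> - T" by auto
    with X show "X \<in> (\<lambda>w. insert w T) ` {w \<in> \<Omega> - T. P (insert w T)}"
      by (intro image_eqI[of _ _ w]) auto
  qed (use assms in auto)
  moreover have "inj_on (\<lambda>w. insert w T) {w \<in> \<Omega> - T. P (insert w T)}"
    by (rule inj_onI) auto
  ultimately show ?thesis
    by (simp add: card_image)
qed

lemma card_triples_in_four:
  assumes "\<forall>U\<in>C. card U = 3" "{x,y,z} \<in> C" "distinct [w,x,y,z]"
  shows "card {U\<in>C. U \<subseteq> {w,x,y,z}}
       = 1 + of_bool ({w,x,y} \<in> C) + of_bool ({w,x,z} \<in> C) + of_bool ({w,y,z} \<in> C)"
proof -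
  let ?F = "{{x,y,z}, {w,x,y}, {w,x,z}, {w,y,z}}"
  have "{U\<in>C. U \<subseteq> {w,x,y,z}} = ?F \<inter> {U. U \<in> C}"
  proof (intro equalityI subsetI)
    fix U assume "U \<in> {U\<in>C. U \<subseteq> {w,x,y,z}}"
    then show "U \<in> ?F \<inter> {U. U \<in> C}"
      using assms(1) subset_card3_of_four[OF assms(3)] by blast
  qed auto
  moreover have "card (?F \<inter> {U. U \<in> C}) = (\<Sum>U\<in>?F. of_bool (U \<in> C))"
    by simp
  moreover have "{x,y,z} \<noteq> {w,x,y}" "{x,y,z} \<noteq> {w,x,z}" "{x,y,z} \<noteq> {w,y,z}"
    "{w,x,y} \<noteq> {w,x,z}" "{w,x,y} \<noteq> {w,y,z}" "{w,x,z} \<noteq> {w,y,z}"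
    using assms(3) by (simp_all add: set_eq_iff) metis+
  ultimately show ?thesis using assms(2) by simp
qed

lemma coherent_insert_iff:
  assumes "{x,y,z} \<in> C" "distinct [w,x,y,z]"
  shows "coherent C {w,x,y,z} \<longleftrightarrow> {w,x,y} \<in> C \<and> {w,x,z} \<in> C \<and> {w,y,z} \<in> C"
proof
  assume "coherent C {w,x,y,z}"
  moreover have "card {w,x,y} = 3" "card {w,x,z} = 3" "card {w,y,z} = 3"
    using assms(2) by auto
  ultimately show "{w,x,y} \<in> C \<and> {w,x,z} \<in> C \<and> {w,y,z} \<in> C"
    unfolding coherent_def by (meson insert_mono subset_insertI)
next
  assume "{w,x,y} \<in> C \<and> {w,x,z} \<in> C \<and> {w,y,z} \<in> C"
  with assms(1) show "coherent C {w,x,y,z}"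
    unfolding coherent_def using subset_card3_of_four[OF assms(2)] by metis
qed

lemma design_2_3_card_third_points:
  assumes "design_2_3 \<Omega> C mu" "{x,y,z} \<in> C" "distinct [x,y,z]"
  shows "Suc (card {w \<in> \<Omega> - {x,y,z}. {w,x,y} \<in> C}) = mu"
proof -
  let ?W = "{w \<in> \<Omega> - {x,y,z}. {w,x,y} \<in> C}"
  have C3: "\<And>U. U \<in> C \<Longrightarrow> U \<subseteq> \<Omega> \<and> card U = 3" and "finite \<Omega>"
    using assms(1) by (auto simp: design_2_3_def)
  have "{x,y} \<subseteq> \<Omega>" "card {x,y} = 2"
    using C3[OF assms(2)] assms(3) by auto
  then have "card {U\<in>C. {x,y} \<subseteq> U} = mu"
    using assms(1) unfolding design_2_3_def by blast
  moreover have "{U\<in>C. {x,y} \<subseteq> U} = insert {x,y,z} ((\<lambda>w. {w,x,y}) ` ?W)"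
  proof (intro equalityI subsetI)
    fix U assume U: "U \<in> {U\<in>C. {x,y} \<subseteq> U}"
    then have "card (U - {x,y}) = 1"
      using C3 assms(3) by (simp add: card_Diff_subset)
    then obtain w where w: "U - {x,y} = {w}" by (rule card_1_singletonE)
    then have Uw: "U = {w,x,y}" using U by blast
    show "U \<in> insert {x,y,z} ((\<lambda>w. {w,x,y}) ` ?W)"
    proof (cases "w = z")
      case True
      then show ?thesis using Uw by blast
    next
      case False
      then have "w \<in> ?W" using w U Uw C3 by auto
      then show ?thesis using Uw by blast
    qed
  qed (use assms(2) in blast)+
  moreover have "{x,y,z} \<notin> (\<lambda>w. {w,x,y}) ` ?W"
    using assms(3) by auto
  moreover have "inj_on (\<lambda>w. {w,x,y}) ?W"
    by (rule inj_onI) (simp add: set_eq_iff, metis)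
  ultimately show ?thesis
    using \<open>finite \<Omega>\<close> by (simp add: card_image)
qed

lemma regular_two_graph_triples_through_point:
  assumes "regular_two_graph \<Omega> C" "{x,y,z} \<in> C" "w \<in> \<Omega>" "distinct [w,x,y,z]"
  shows "of_bool ({w,x,y} \<in> C) + of_bool ({w,x,z} \<in> C) + of_bool ({w,y,z} \<in> C)
       = (1 + 2 * of_bool (coherent C {w,x,y,z}) :: nat)"
proof -
  obtain mu where des: "design_2_3 \<Omega> C mu" and four: "\<And>X. X \<subseteq> \<Omega> \<Longrightarrow> card X = 4 \<Longrightarrow>
      card {U\<in>C. U \<subseteq> X} \<in> {0, 2, 4}"
    using assms(1) unfolding regular_two_graph_def by blast
  have "\<forall>U\<in>C. card U = 3" "{x,y,z} \<subseteq> \<Omega>"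
    using des assms(2) by (auto simp: design_2_3_def)
  then have "1 + of_bool ({w,x,y} \<in> C) + of_bool ({w,x,z} \<in> C) + of_bool ({w,y,z} \<in> C)
      \<in> {0, 2, 4::nat}"
    using four[of "{w,x,y,z}"] card_triples_in_four[OF _ assms(2,4)] assms(3,4) by simp
  then show ?thesis
    unfolding coherent_insert_iff[OF assms(2,4)]
    by (cases "{w,x,y} \<in> C"; cases "{w,x,z} \<in> C"; cases "{w,y,z} \<in> C") auto
qed

lemma regular_two_graph_card_eq:
  assumes "regular_two_graph \<Omega> C" "design_2_3 \<Omega> C mu" "T \<in> C"
  shows "card \<Omega> + 2 * card {X. X \<subseteq> \<Omega> \<and> card X = 4 \<and> T \<subseteq> X \<and> coherent C X} = 3 * mu"
proof -
  have "finite \<Omega>" "T \<subseteq> \<Omega>" "card T = 3"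
    using assms(2,3) by (auto simp: design_2_3_def)
  then obtain x y z where T: "T = {x,y,z}" and xyz: "distinct [x,y,z]"
    by (auto simp: card_3_iff)
  define D where "D = \<Omega> - T"
  define k where "k w = (of_bool ({w,x,y} \<in> C) + of_bool ({w,x,z} \<in> C) + of_bool ({w,y,z} \<in> C) :: nat)"
    for w :: 'a
  have "finite D" and card_D: "card D + 3 = card \<Omega>"
    using \<open>finite \<Omega>\<close> \<open>T \<subseteq> \<Omega>\<close> \<open>card T = 3\<close> card_mono[OF \<open>finite \<Omega>\<close> \<open>T \<subseteq> \<Omega>\<close>]
    by (auto simp: D_def card_Diff_subset finite_subset)
  have perm: "{x,z,y} = {x,y,z}" "{y,z,x} = {x,y,z}" by auto
  have "Suc (card {w \<in> D. {w,x,y} \<in> C}) = mu" "Suc (card {w \<in> D. {w,x,z} \<in> C}) = mu"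
    "Suc (card {w \<in> D. {w,y,z} \<in> C}) = mu"
    using design_2_3_card_third_points[OF assms(2), of x y z]
      design_2_3_card_third_points[OF assms(2), of x z y, unfolded perm]
      design_2_3_card_third_points[OF assms(2), of y z x, unfolded perm]
      assms(3) xyz unfolding D_def T by auto
  then have "(\<Sum>w\<in>D. k w) + 3 = 3 * mu"
    using \<open>finite D\<close> by (simp add: k_def sum.distrib Int_def)
  moreover have "k w = 1 + 2 * of_bool (coherent C {w,x,y,z})" if "w \<in> D" for w
    unfolding k_def using that xyz assms(3) T
    by (intro regular_two_graph_triples_through_point[OF assms(1)]) (auto simp: D_def)
  then have "(\<Sum>w\<in>D. k w) = card D + 2 * card {w \<in> D. coherent C {w,x,y,z}}"
    using \<open>finite D\<close> by (simp add: sum_Suc sum_distrib_left[symmetric] Int_def)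
  moreover have "card {X. X \<subseteq> \<Omega> \<and> card X = 4 \<and> T \<subseteq> X \<and> coherent C X}
      = card {w \<in> D. coherent C {w,x,y,z}}"
    using card_one_point_extensions[OF \<open>T \<subseteq> \<Omega>\<close>, of "coherent C"] \<open>card T = 3\<close>
    by (simp add: D_def T)
  ultimately show ?thesis using card_D by linarith
qed

context
  fixes \<Omega> :: "'a set" and B :: "'a set multiset" and lam :: nat
  assumes design: "design_2_4 \<Omega> B lam" and supersimple: "supersimple B"
begin

lemma design_2_4_block: "b \<in># B \<Longrightarrow> b \<subseteq> \<Omega> \<and> card b = 4 \<and> finite b"
  using design by (auto simp: design_2_4_def card_ge_0_finite)

lemma supersimple_count_le_1: "count B b \<le> 1"
proof (rule ccontr)
  assume "\<not> count B b \<le> 1"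
  then have "b \<in># B" "b \<in># B - {#b#}"
    by (simp_all add: in_diff_count flip: count_greater_zero_iff)
  then have "card (b \<inter> b) \<le> 2" using supersimple unfolding supersimple_def by blast
  then show False using design_2_4_block[OF \<open>b \<in># B\<close>] by simp
qed

lemma supersimple_block_unique:
  assumes "T \<subseteq> b" "T \<subseteq> c" "card T \<ge> 3" "b \<in># B" "c \<in># B"
  shows "b = c"
proof (rule ccontr)
  assume "b \<noteq> c"
  with assms(4,5) have "c \<in># B - {#b#}" by (simp add: in_diff_count)
  then have "card (b \<inter> c) \<le> 2" using supersimple assms(4) unfolding supersimple_def by blast
  moreover have "card T \<le> card (b \<inter> c)"
    using assms design_2_4_block[OF assms(4)] by (intro card_mono) auto
  ultimately show False using assms(3) by simp
qed

lemma collinear_triples_through_pair: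
  assumes "card P = 2"
  shows "{U \<in> collinear_triples \<Omega> B. P \<subseteq> U}
       = (\<Union>b \<in> set_mset (filter_mset (\<lambda>b. P \<subseteq> b) B). (\<lambda>w. insert w P) ` (b - P))"
proof (intro equalityI subsetI)
  fix U assume U: "U \<in> {U \<in> collinear_triples \<Omega> B. P \<subseteq> U}"
  then obtain b where b: "b \<in># B" "U \<subseteq> b" and "card U = 3" "P \<subseteq> U"
    by (auto simp: collinear_triples_def)
  then have "card (U - P) = 1"
    using assms by (simp add: card_Diff_subset card_ge_0_finite)
  then obtain w where "U - P = {w}" by (rule card_1_singletonE)
  then have "U = insert w P" "w \<in> b - P" using b \<open>P \<subseteq> U\<close> by auto
  with b \<open>P \<subseteq> U\<close> show "U \<in> (\<Union>b \<in> set_mset (filter_mset (\<lambda>b. P \<subseteq> b) B). (\<lambda>w. insert w P) ` (b - P))"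
    by auto
next
  fix U assume "U \<in> (\<Union>b \<in> set_mset (filter_mset (\<lambda>b. P \<subseteq> b) B). (\<lambda>w. insert w P) ` (b - P))"
  then obtain b w where "b \<in># B" "P \<subseteq> b" "w \<in> b - P" "U = insert w P" by auto
  with assms design_2_4_block[OF \<open>b \<in># B\<close>] show "U \<in> {U \<in> collinear_triples \<Omega> B. P \<subseteq> U}"
    by (auto simp: collinear_triples_def card_ge_0_finite)
qed

lemma card_collinear_triples_through_pair:
  assumes P: "P \<subseteq> \<Omega>" "card P = 2"
  shows "card {U \<in> collinear_triples \<Omega> B. P \<subseteq> U} = 2 * lam"
proof -
  let ?Bp = "filter_mset (\<lambda>b. P \<subseteq> b) B"
  have "card (set_mset ?Bp) = lam"
    using design P size_eq_card_set_mset[of ?Bp] supersimple_count_le_1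
    by (simp add: design_2_4_def)
  moreover have "card ((\<lambda>w. insert w P) ` (b - P)) = 2" if "b \<in># ?Bp" for b
  proof -
    have "inj_on (\<lambda>w. insert w P) (b - P)" by (rule inj_onI) auto
    then show ?thesis
      using that P design_2_4_block[of b] by (simp add: card_image card_Diff_subset card_ge_0_finite)
  qed
  moreover have "(\<lambda>w. insert w P) ` (b - P) \<inter> (\<lambda>w. insert w P) ` (c - P) = {}"
    if "b \<in># ?Bp" "c \<in># ?Bp" "b \<noteq> c" for b c
  proof -
    have "insert w P \<notin> (\<lambda>w. insert w P) ` (c - P)" if w: "w \<in> b - P" for w
    proof
      assume "insert w P \<in> (\<lambda>w. insert w P) ` (c - P)"
      then obtain v where "v \<in> c - P" "insert w P = insert v P" by blast
      then have "w \<in> c" using w by (metis Diff_iff insertCI insertE)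
      then have "b = c"
        using supersimple_block_unique[of "insert w P" b c] w P \<open>b \<in># ?Bp\<close> \<open>c \<in># ?Bp\<close>
        by (auto simp: card_ge_0_finite)
      with \<open>b \<noteq> c\<close> show False ..
    qed
    then show ?thesis by blast
  qed
  ultimately show ?thesis
    unfolding collinear_triples_through_pair[OF P(2)]
    by (subst card_UN_disjoint) (auto simp: design_2_4_block card_ge_0_finite)
qed

lemma design_2_3_collinear_triples: "design_2_3 \<Omega> (collinear_triples \<Omega> B) (2 * lam)"
  using design card_collinear_triples_through_pair
  by (auto simp: design_2_3_def design_2_4_def collinear_triples_def)

end

theorem corollary2p4:
  fixes \<Omega> :: "'a set" and B :: "'a set multiset" and lam :: nat
  assumes "design_2_4 \<Omega> B lam"
    and "supersimple B"
    and "lam > 0" and "card \<Omega> \<ge> 2"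
    and "regular_two_graph \<Omega> (collinear_triples \<Omega> B)"
  shows "\<exists>s::nat.
     (\<forall>T\<in>collinear_triples \<Omega> B.
        card {X. X \<subseteq> \<Omega> \<and> card X = 4 \<and> T \<subseteq> X \<and> coherent (collinear_triples \<Omega> B) X} = s)
     \<and> int (card \<Omega>) = 6 * int lam - 2 * int s
     \<and> even (card \<Omega>)"
proof -
  let ?C = "collinear_triples \<Omega> B"
  let ?s = "\<lambda>T. card {X. X \<subseteq> \<Omega> \<and> card X = 4 \<and> T \<subseteq> X \<and> coherent ?C X}"
  have des: "design_2_3 \<Omega> ?C (2 * lam)"
    by (rule design_2_3_collinear_triples[OF assms(1,2)])
  have count: "card \<Omega> + 2 * ?s T = 6 * lam" if "T \<in> ?C" for T
    using regular_two_graph_card_eq[OF assms(5) des that] by simp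
  obtain P where "P \<subseteq> \<Omega>" "card P = 2"
    using assms(4) des obtain_subset_with_card_n by (metis design_2_3_def)
  then have "card {U \<in> ?C. P \<subseteq> U} = 2 * lam"
    using des unfolding design_2_3_def by blast
  then obtain T0 where T0: "T0 \<in> ?C"
    using assms(3) by (metis (no_types, lifting) card.empty empty_Collect_eq mult_is_0 not_gr0 zero_neq_numeral)
  show ?thesis
  proof (intro exI conjI ballI)
    fix T assume "T \<in> ?C"
    show "?s T = ?s T0" using count[OF \<open>T \<in> ?C\<close>] count[OF T0] by simp
  next
    show "int (card \<Omega>) = 6 * int lam - 2 * int (?s T0)"
      using arg_cong[OF count[OF T0], of int] by simp
  next
    show "even (card \<Omega>)" using count[OF T0] by presburger
  qed
qed

end
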